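(* Let $n\ge1$ and $\beta\ge2(n+2)$. For every $l=(l_j)_{j\ge1}\in\mathbb{Z}^\infty$ with finitely many nonzero entries and $1\le|l|\le2$, $$\ln(1+\langle l\rangle)\ge\frac18\,\|l\|_{2\beta}^{\frac1{2\beta}}\,\|l\|_{-2\beta}^{\frac1{2\beta}},$$ where $\|l\|_{\pm2\beta}=\sup_{j\ge1}|l_j|(1+\ln j)^{\pm2\beta}$.
   Context: $|l|=\sum_j|l_j|$ and $\langle l\rangle=\max\{1,|\sum_{j\ge1}jl_j|\}$. *)

theory Defs
  imports Complex_Main
begin

text \<open>Sequences l = (l_j)_{j>=1} in Z^infinity are modelled as functions nat => int;
  only the indices j >= 1 are used (the value at 0 is ignored).\<close>

definition supp1 :: "(nat \<Rightarrow> int) \<Rightarrow> nat set" where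
  "supp1 l = {j. 1 \<le> j \<and> l j \<noteq> 0}"

definition abs_l :: "(nat \<Rightarrow> int) \<Rightarrow> int" where
  "abs_l l = (\<Sum>j\<in>supp1 l. \<bar>l j\<bar>)"

definition bracket_l :: "(nat \<Rightarrow> int) \<Rightarrow> int" where
  "bracket_l l = max 1 \<bar>\<Sum>j\<in>supp1 l. int j * l j\<bar>"

definition wnorm :: "real \<Rightarrow> (nat \<Rightarrow> int) \<Rightarrow> real" where
  "wnorm p l = (SUP j\<in>{1..}. real_of_int \<bar>l j\<bar> * (1 + ln (real j)) powr p)"

end

theory Submission
  imports Defs
begin

text \<open>Since 1 <= |l| <= 2, the support of l is a single index or two indices carrying +-1;
  if i <= j are its least and largest index, then <l> >= j - i. The weighted norms are attained
  on the support, so the right-hand side is at most 2^(1/beta) (1 + ln j) / (8 (1 + ln i)).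
  Finally j <= i (1 + <l>) bounds the ratio of logarithms by 1 + ln (1 + <l>), which is at most
  3 ln (1 + <l>) because ln 2 >= 1/2.\<close>

lemma abs_le_abs_l:
  assumes "finite (supp1 l)" "j \<in> supp1 l"
  shows "\<bar>l j\<bar> \<le> abs_l l"
  unfolding abs_l_def using assms by (intro member_le_sum) auto

lemma card_supp1_le_abs_l:
  assumes "finite (supp1 l)"
  shows "int (card (supp1 l)) \<le> abs_l l"
proof -
  have "int (card (supp1 l)) = (\<Sum>j\<in>supp1 l. 1)" by simp
  also have "\<dots> \<le> abs_l l"
    unfolding abs_l_def by (intro sum_mono) (auto simp: supp1_def)
  finally show ?thesis .
qed

lemma supp1_diam_le_bracket_l:
  assumes "finite (supp1 l)" "supp1 l \<noteq> {}" "abs_l l \<le> 2"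
  shows "int (Max (supp1 l) - Min (supp1 l)) \<le> bracket_l l"
proof -
  define S where "S = supp1 l"
  have "card S \<le> 2" "card S \<noteq> 0"
    using card_supp1_le_abs_l[of l] assms by (auto simp: S_def)
  then consider x where "S = {x}" | i j where "S = {i, j}" "i \<noteq> j"
    by (metis card_1_singletonE card_2_iff le_Suc_eq numeral_2_eq_2 One_nat_def le_0_eq)
  then show ?thesis
  proof cases
    case 1
    then show ?thesis by (simp add: S_def bracket_l_def)
  next
    case (2 i j)
    have "l i \<noteq> 0" "l j \<noteq> 0"
      using 2 by (auto simp: S_def supp1_def)
    moreover have "abs_l l = \<bar>l i\<bar> + \<bar>l j\<bar>"
      using 2 by (simp add: abs_l_def S_def[symmetric])
    ultimately have "l i = 1 \<or> l i = -1" "l j = 1 \<or> l j = -1"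
      using assms(3) by linarith+
    then have "\<bar>int i - int j\<bar> \<le> \<bar>int i * l i + int j * l j\<bar>"
      by (elim disjE) (simp_all add: abs_if)
    then show ?thesis
      using 2 by (auto simp: S_def[symmetric] bracket_l_def)
  qed
qed

lemma wnorm_nonneg:
  assumes "finite (supp1 l)"
  shows "0 \<le> wnorm p l"
proof -
  let ?f = "\<lambda>j. real_of_int \<bar>l j\<bar> * (1 + ln (real j)) powr p"
  have "?f ` {1..} \<subseteq> insert 0 (?f ` supp1 l)"
    by (auto simp: supp1_def)
  then have "bdd_above (?f ` {1..})"
    using assms by (meson bdd_above_mono finite_imageI finite_insert bdd_above_finite)
  then have "?f 1 \<le> wnorm p l"
    unfolding wnorm_def by (intro cSUP_upper) auto
  then show ?thesis by simp
qed

lemma wnorm_le: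
  assumes "\<And>j. j \<in> supp1 l \<Longrightarrow> real_of_int \<bar>l j\<bar> * (1 + ln (real j)) powr p \<le> C"
    and "0 \<le> C"
  shows "wnorm p l \<le> C"
  unfolding wnorm_def
proof (rule cSUP_least)
  fix j :: nat
  assume "j \<in> {1..}"
  then show "real_of_int \<bar>l j\<bar> * (1 + ln (real j)) powr p \<le> C"
    using assms by (cases "l j = 0") (auto simp: supp1_def)
qed simp

lemma wnorm_le_Max:
  assumes "finite (supp1 l)" "supp1 l \<noteq> {}"
    and "\<And>j. j \<in> supp1 l \<Longrightarrow> \<bar>l j\<bar> \<le> c" "0 \<le> c" "0 \<le> p"
  shows "wnorm p l \<le> c * (1 + ln (Max (supp1 l))) powr p"
proof (rule wnorm_le)
  fix j
  assume j: "j \<in> supp1 l"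
  then have "1 \<le> j" "j \<le> Max (supp1 l)"
    using assms(1) by (auto simp: supp1_def)
  then have "(1 + ln (real j)) powr p \<le> (1 + ln (Max (supp1 l))) powr p"
    using assms(5) by (intro powr_mono2) auto
  then show "real_of_int \<bar>l j\<bar> * (1 + ln (real j)) powr p \<le> c * (1 + ln (Max (supp1 l))) powr p"
    using assms(3)[OF j] by (intro mult_mono) auto
next
  show "0 \<le> c * (1 + ln (Max (supp1 l))) powr p" using assms(4) by simp
qed

lemma wnorm_le_Min:
  assumes "finite (supp1 l)" "supp1 l \<noteq> {}"
    and "\<And>j. j \<in> supp1 l \<Longrightarrow> \<bar>l j\<bar> \<le> c" "0 \<le> c" "p \<le> 0"
  shows "wnorm p l \<le> c * (1 + ln (Min (supp1 l))) powr p"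
proof (rule wnorm_le)
  fix j
  assume j: "j \<in> supp1 l"
  then have "1 \<le> Min (supp1 l)" "Min (supp1 l) \<le> j"
    using assms(1,2) by (auto simp: supp1_def)
  then have "(1 + ln (real j)) powr p \<le> (1 + ln (Min (supp1 l))) powr p"
    using assms(5) by (intro powr_mono2') (auto intro: add_pos_nonneg)
  then show "real_of_int \<bar>l j\<bar> * (1 + ln (real j)) powr p \<le> c * (1 + ln (Min (supp1 l))) powr p"
    using assms(3)[OF j] by (intro mult_mono) auto
next
  show "0 \<le> c * (1 + ln (Min (supp1 l))) powr p" using assms(4) by simp
qed

lemma powr_root_le_of_le_mult_powr:
  fixes w c x p :: real
  assumes "0 \<le> w" "w \<le> c * x powr p" "0 \<le> c" "0 < x" "0 < p"
  shows "w powr (1/p) \<le> c powr (1/p) * x"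
proof -
  have "w powr (1/p) \<le> (c * x powr p) powr (1/p)"
    using assms by (intro powr_mono2) auto
  also have "\<dots> = c powr (1/p) * x"
    using assms by (simp add: powr_mult powr_powr)
  finally show ?thesis .
qed

lemma wnorm_root_le_Max:
  assumes "finite (supp1 l)" "supp1 l \<noteq> {}"
    and "\<And>j. j \<in> supp1 l \<Longrightarrow> \<bar>l j\<bar> \<le> c" "0 \<le> c" "0 < p"
  shows "wnorm p l powr (1/p) \<le> c powr (1/p) * (1 + ln (Max (supp1 l)))"
proof (rule powr_root_le_of_le_mult_powr)
  show "wnorm p l \<le> c * (1 + ln (Max (supp1 l))) powr p"
    using wnorm_le_Max[OF assms(1-4)] assms(5) by simp
  have "1 \<le> Max (supp1 l)"
    using assms(1,2) Max_in[OF assms(1,2)] by (auto simp: supp1_def)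
  then show "0 < 1 + ln (Max (supp1 l))" by (auto intro: add_pos_nonneg)
qed (use assms wnorm_nonneg in auto)

lemma wnorm_neg_root_le_Min:
  assumes "finite (supp1 l)" "supp1 l \<noteq> {}"
    and "\<And>j. j \<in> supp1 l \<Longrightarrow> \<bar>l j\<bar> \<le> c" "0 \<le> c" "0 < p"
  shows "wnorm (-p) l powr (1/p) \<le> c powr (1/p) / (1 + ln (Min (supp1 l)))"
proof -
  define a where "a = 1 + ln (real (Min (supp1 l)))"
  have "1 \<le> Min (supp1 l)"
    using assms(1,2) Min_in[OF assms(1,2)] by (auto simp: supp1_def)
  then have a: "1 \<le> a" by (simp add: a_def)
  have "wnorm (-p) l \<le> c * a powr (-p)"
    unfolding a_def using wnorm_le_Min[OF assms(1-4)] assms(5) by simp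
  also have "a powr (-p) = (1 / a) powr p"
    using a by (simp add: powr_minus_divide powr_divide)
  finally have "wnorm (-p) l powr (1/p) \<le> c powr (1/p) * (1 / a)"
    using a assms(4,5) by (intro powr_root_le_of_le_mult_powr wnorm_nonneg[OF assms(1)]) auto
  then show ?thesis by (simp add: a_def)
qed

lemma ln_2_ge_half: "1/2 \<le> ln (2::real)"
proof -
  have "exp (1/2::real) \<le> 2" using exp_bound_half[of "1/2::real"] by simp
  then show ?thesis by (metis exp_gt_zero ln_exp ln_le_cancel_iff zero_less_numeral)
qed

lemma one_plus_ln_le_mult:
  fixes a b m :: real
  assumes "1 \<le> a" "a \<le> b" "b - a \<le> m" "0 \<le> m"
  shows "1 + ln b \<le> (1 + ln a) * (1 + ln (1 + m))"
proof -
  have "b \<le> a * (1 + m)"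
    using assms mult_right_mono[of 1 a m] by (simp add: algebra_simps)
  then have "ln b \<le> ln (a * (1 + m))"
    using assms by simp
  also have "\<dots> = ln a + ln (1 + m)"
    using assms by (simp add: ln_mult)
  finally have "ln b \<le> ln a + ln (1 + m)" .
  moreover have "0 \<le> ln a * ln (1 + m)"
    using assms by simp
  ultimately show ?thesis by (simp add: algebra_simps)
qed

lemma one_plus_ln_ratio_le:
  fixes a b m :: real
  assumes "1 \<le> a" "a \<le> b" "b - a \<le> m" "1 \<le> m"
  shows "(1 + ln b) / (1 + ln a) \<le> 3 * ln (1 + m)"
proof -
  have "ln 2 \<le> ln (1 + m)" using assms(4) by simp
  then have "1 + ln (1 + m) \<le> 3 * ln (1 + m)" using ln_2_ge_half by linarith
  moreover have pos: "0 < 1 + ln a" using assms(1) by (auto intro: add_pos_nonneg)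
  ultimately have "(1 + ln a) * (1 + ln (1 + m)) \<le> (1 + ln a) * (3 * ln (1 + m))"
    by (intro mult_left_mono) auto
  then have "1 + ln b \<le> (1 + ln a) * (3 * ln (1 + m))"
    using one_plus_ln_le_mult[OF assms(1-3)] assms(4) by linarith
  then show ?thesis using pos by (simp add: divide_simps mult.commute)
qed

theorem lemma6p2:
  fixes n :: nat and \<beta> :: real and l :: "nat \<Rightarrow> int"
  assumes "n \<ge> 1"
    and "\<beta> \<ge> 2 * (real n + 2)"
    and "finite (supp1 l)"
    and "1 \<le> abs_l l" and "abs_l l \<le> 2"
  shows "ln (1 + real_of_int (bracket_l l))
           \<ge> 1/8 * wnorm (2*\<beta>) l powr (1/(2*\<beta>)) * wnorm (-(2*\<beta>)) l powr (1/(2*\<beta>))"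
proof -
  define L where "L = ln (1 + real_of_int (bracket_l l))"
  define e where "e = 1 / (2*\<beta>)"
  have \<beta>: "1 \<le> \<beta>" using assms(1,2) by simp
  have ne: "supp1 l \<noteq> {}"
    using assms(4) by (auto simp: abs_l_def)
  have le2: "real_of_int \<bar>l k\<bar> \<le> 2" if "k \<in> supp1 l" for k
    using abs_le_abs_l[OF assms(3) that] assms(5) by linarith
  have "2 powr e * 2 powr e = 2 powr (1 / \<beta>)"
    by (simp add: e_def powr_add[symmetric])
  also have "\<dots> \<le> 2 powr 1" using \<beta> by (intro powr_mono) auto
  finally have two: "2 powr e * 2 powr e \<le> (2::real)" by simp
  have Min_Max: "1 \<le> Min (supp1 l)" "Min (supp1 l) \<le> Max (supp1 l)"
    using assms(3) ne Min_in[OF assms(3) ne] by (auto simp: supp1_def)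
  moreover have "int (Max (supp1 l)) - int (Min (supp1 l)) \<le> bracket_l l"
    using supp1_diam_le_bracket_l[OF assms(3) ne assms(5)] Min_Max by (simp add: of_nat_diff)
  ultimately have ratio:
      "(1 + ln (Max (supp1 l))) / (1 + ln (Min (supp1 l))) \<le> 3 * L"
    unfolding L_def by (intro one_plus_ln_ratio_le) (auto simp: bracket_l_def)
  have "1/8 * wnorm (2*\<beta>) l powr e * wnorm (-(2*\<beta>)) l powr e
      \<le> 1/8 * (2 powr e * (1 + ln (Max (supp1 l)))) * (2 powr e / (1 + ln (Min (supp1 l))))"
    unfolding e_def
    using wnorm_root_le_Max[OF assms(3) ne le2] wnorm_neg_root_le_Min[OF assms(3) ne le2] \<beta> Min_Max
    by (intro mult_mono) (auto intro: add_nonneg_nonneg)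
  also have "\<dots> = 1/8 * (2 powr e * 2 powr e)
      * ((1 + ln (Max (supp1 l))) / (1 + ln (Min (supp1 l))))"
    by simp
  also have "\<dots> \<le> 1/8 * 2 * (3 * L)"
    using two ratio Min_Max by (intro mult_mono) (auto intro: add_nonneg_nonneg divide_nonneg_pos)
  also have "\<dots> \<le> L" unfolding L_def by (simp add: bracket_l_def)
  finally show ?thesis unfolding L_def e_def .
qed

end
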